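(* Let $C$ be an $(n,n-b)$-code, let $d\in\{0,1,\dots,b\}$, and let $C'$ be any $(m,m-1)$ MDS code. The following are equivalent: (a) $C$ is $\operatorname{rMDS}^d(m)$; (b) $C'\otimes C$ is a $(1,b-d)$-relaxed $(m,n,1,b)$-MR tensor code.
   Context: An $(n,k)$-code is a $k$-dimensional subspace of $\mathbb F^n$ with a $k\times n$ generator matrix. For a $k\times n$ matrix $V$ and $A\subseteq[n]$, $V|_A$ is the submatrix of columns in $A$. For $A_1,\dots,A_\ell\subseteq[n]$, $\mathcal G_{A_1,\dots,A_\ell}[V]$ is the $\ell k\times(k+\sum|A_i|)$ block matrix whose $i$-th block row has $I_k$ in the first block column and $V|_{A_i}$ in block column $i+1$, zeros elsewhere. Sets are $V$-saturated if $\operatorname{rank}\mathcal G_{A_1,\dots,A_\ell}[V]=\ell k$, and have the $k$-dimensional saturation property if they are $W$-saturated for a generic $k\times n$ matrix $W$ (independent indeterminate entries). An $(n,k)$-code with generator matrix $G$ is $\operatorname{rMDS}^d(\ell)$ ($0\le d\le n-k$) if every family $A_1,\dots,A_\ell$ with the $(k+d)$-dimensional saturation property is $G$-saturated. Tensor codes: for an $(m,m-a)$-code $C_1$ and an $(n,n-b)$-code $C_2$, $C_1\otimes C_2$ is the code of $m\times n$ arrays whose columns lie in $C_1$ and rows in $C_2$. An erasure pattern $E\subseteq[m]\times[n]$ is correctable by a code if every codeword is determined by its entries outside $E$. $\mathcal E^{m,n}_{a,b}$ denotes the set of patterns correctable by an $(m,n,a,b)$-maximally recoverable tensor code over the relevant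 field characteristic, i.e. by $C_1\otimes C_2$ where $C_1,C_2$ have generic generator matrices of sizes $(m-a)\times m$ and $(n-b)\times n$. For $a'\le a$, $b'\le b$, $C_1\otimes C_2$ (with $C_1$ an $(m,m-a)$-code and $C_2$ an $(n,n-b)$-code) is an $(a',b')$-relaxed $(m,n,a,b)$-MR tensor code if it corrects every $E\in\mathcal E^{m,n}_{a',b'}$. *)

theory Defs
  imports "HOL-Library.Poly_Mapping" "HOL-Library.Product_Lexorder"
          "HOL-Computational_Algebra.Fraction_Field"
begin

(* Matrices are functions nat => nat => 'k, with explicit dimensions;
   entries outside the stated ranges are ignored. Vectors are nat => 'k. *)

definition full_row_rank :: "(nat \<Rightarrow> nat \<Rightarrow> 'k::field) \<Rightarrow> nat \<Rightarrow> nat \<Rightarrow> bool" where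
  "full_row_rank M r c \<longleftrightarrow>
     (\<forall>u. (\<forall>j<c. (\<Sum>i<r. u i * M i j) = 0) \<longrightarrow> (\<forall>i<r. u i = 0))"

definition restrict_cols :: "(nat \<Rightarrow> nat \<Rightarrow> 'k) \<Rightarrow> nat set \<Rightarrow> nat \<Rightarrow> nat \<Rightarrow> 'k" where
  "restrict_cols V A = (\<lambda>p q. V p (sorted_list_of_set A ! q))"

text \<open>The (l*k) x (k + sum |A_i|) block matrix G_{A_0,...,A_{l-1}}[V]:
  block row i has I_k in block column 0 and V|_{A_i} in block column i+1.\<close>
definition gblock :: "nat \<Rightarrow> (nat \<Rightarrow> nat \<Rightarrow> 'k::{zero,one}) \<Rightarrow> (nat \<Rightarrow> nat set) \<Rightarrow> nat \<Rightarrow> nat \<Rightarrow> 'k" where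
  "gblock k V A = (\<lambda>r c.
     (let i = r div k; p = r mod k in
      if c < k then (if c = p then 1 else 0)
      else (let c' = c - k; off = (\<Sum>t<i. card (A t)) in
            if off \<le> c' \<and> c' < off + card (A i)
            then restrict_cols V (A i) p (c' - off) else 0)))"

definition saturated :: "nat \<Rightarrow> (nat \<Rightarrow> nat \<Rightarrow> 'k::field) \<Rightarrow> (nat \<Rightarrow> nat set) \<Rightarrow> nat \<Rightarrow> bool" where
  "saturated k V A l \<longleftrightarrow> full_row_rank (gblock k V A) (l * k) (k + (\<Sum>i<l. card (A i)))"

text \<open>Generic matrices: entries are independent indeterminates X_(t,i,j) in the
  rational function field over the coefficient field 'a (t distinguishes
  different generic matrices).\<close>
type_synonym 'a gfield = "(((nat \<times> nat \<times> nat) \<Rightarrow>\<^sub>0 nat) \<Rightarrow>\<^sub>0 'a) fract"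

definition indet :: "nat \<Rightarrow> nat \<Rightarrow> nat \<Rightarrow> 'a::field gfield" where
  "indet t i j = Fract (Poly_Mapping.single (Poly_Mapping.single (t, i, j) (1::nat)) (1::'a)) 1"

definition generic :: "nat \<Rightarrow> nat \<Rightarrow> nat \<Rightarrow> 'a::field gfield" where
  "generic t = (\<lambda>i j. indet t i j)"

definition sat_property :: "'a::field itself \<Rightarrow> nat \<Rightarrow> (nat \<Rightarrow> nat set) \<Rightarrow> nat \<Rightarrow> bool" where
  "sat_property _ k A l \<longleftrightarrow> saturated k (generic 0 :: nat \<Rightarrow> nat \<Rightarrow> 'a gfield) A l"

definition is_code :: "(nat \<Rightarrow> nat \<Rightarrow> 'k::field) \<Rightarrow> nat \<Rightarrow> nat \<Rightarrow> bool" where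
  "is_code G n k \<longleftrightarrow> k \<le> n \<and> full_row_rank G k n"

definition is_MDS :: "(nat \<Rightarrow> nat \<Rightarrow> 'k::field) \<Rightarrow> nat \<Rightarrow> nat \<Rightarrow> bool" where
  "is_MDS G n k \<longleftrightarrow> is_code G n k \<and>
     (\<forall>S \<subseteq> {..<n}. card S = k \<longrightarrow> full_row_rank (restrict_cols G S) k k)"

definition rMDS :: "(nat \<Rightarrow> nat \<Rightarrow> 'a::field) \<Rightarrow> nat \<Rightarrow> nat \<Rightarrow> nat \<Rightarrow> nat \<Rightarrow> bool" where
  "rMDS G n k d l \<longleftrightarrow>
     (\<forall>A. (\<forall>i<l. A i \<subseteq> {..<n}) \<and> sat_property TYPE('a) (k + d) A l \<longrightarrow> saturated k G A l)"

definition in_code :: "(nat \<Rightarrow> nat \<Rightarrow> 'k::field) \<Rightarrow> nat \<Rightarrow> nat \<Rightarrow> (nat \<Rightarrow> 'k) \<Rightarrow> bool" where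
  "in_code G k n v \<longleftrightarrow> (\<exists>c. \<forall>j<n. v j = (\<Sum>i<k. c i * G i j))"

definition tensor_cw :: "(nat \<Rightarrow> nat \<Rightarrow> 'k::field) \<Rightarrow> nat \<Rightarrow> (nat \<Rightarrow> nat \<Rightarrow> 'k) \<Rightarrow> nat \<Rightarrow> nat \<Rightarrow> nat
    \<Rightarrow> (nat \<Rightarrow> nat \<Rightarrow> 'k) \<Rightarrow> bool" where
  "tensor_cw G1 k1 G2 k2 m n X \<longleftrightarrow>
     (\<forall>j<n. in_code G1 k1 m (\<lambda>i. X i j)) \<and> (\<forall>i<m. in_code G2 k2 n (\<lambda>j. X i j))"

definition correctable :: "(nat \<Rightarrow> nat \<Rightarrow> 'k::field) \<Rightarrow> nat \<Rightarrow> (nat \<Rightarrow> nat \<Rightarrow> 'k) \<Rightarrow> nat \<Rightarrow> nat \<Rightarrow> nat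
    \<Rightarrow> (nat \<times> nat) set \<Rightarrow> bool" where
  "correctable G1 k1 G2 k2 m n E \<longleftrightarrow>
     (\<forall>X Y. tensor_cw G1 k1 G2 k2 m n X \<and> tensor_cw G1 k1 G2 k2 m n Y \<and>
        (\<forall>i<m. \<forall>j<n. (i, j) \<notin> E \<longrightarrow> X i j = Y i j) \<longrightarrow> (\<forall>i<m. \<forall>j<n. X i j = Y i j))"

definition MR_patterns :: "'a::field itself \<Rightarrow> nat \<Rightarrow> nat \<Rightarrow> nat \<Rightarrow> nat \<Rightarrow> (nat \<times> nat) set set" where
  "MR_patterns _ m n a b = {E. E \<subseteq> {..<m} \<times> {..<n} \<and>
     correctable (generic 0 :: nat \<Rightarrow> nat \<Rightarrow> 'a gfield) (m - a) (generic 1) (n - b) m n E}"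

definition relaxed_MR :: "(nat \<Rightarrow> nat \<Rightarrow> 'a::field) \<Rightarrow> (nat \<Rightarrow> nat \<Rightarrow> 'a) \<Rightarrow> nat \<Rightarrow> nat \<Rightarrow> nat \<Rightarrow> nat
    \<Rightarrow> nat \<Rightarrow> nat \<Rightarrow> bool" where
  "relaxed_MR G1 G2 m n a b a' b' \<longleftrightarrow> a' \<le> a \<and> b' \<le> b \<and>
     (\<forall>E \<in> MR_patterns TYPE('a) m n a' b'. correctable G1 (m - a) G2 (n - b) m n E)"

end

theory Submission
  imports Defs "Jordan_Normal_Form.Determinant"
begin

(* Let h be a parity-check vector of the (m, m-1) MDS code C'; none of its entries is zero.
   An array of C' (x) C that vanishes outside an erasure pattern E has rows e_i G, and its
   columns lie in C' iff t = sum_i h_i e_i satisfies t G = 0. Writing w_i = h_i e_i and moving t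
   into the last block gives blocks with sum_i w_i = 0 and w_i G|_{A_i} = 0, where A_i is the set
   of unerased positions of row i: a left-kernel vector of G_{A_1,...,A_m}[G]. Hence E is
   correctable by C' (x) C iff A_1, ..., A_m are G-saturated. Applied to the generic codes that
   define MR patterns, E is a (1, b-d) MR pattern iff A_1, ..., A_m have the (n-b+d)-dimensional
   saturation property, and the two conditions of the theorem coincide. *)

section \<open>Saturation as a left-kernel condition\<close>

(* The left kernel of G_{A_0,...,A_{l-1}}[V], cut into l blocks w_i of length k: the identity
   columns force sum_i w_i = 0, and block column i+1 forces w_i V|_{A_i} = 0. *)
definition trivial_left_kernel :: "nat \<Rightarrow> (nat \<Rightarrow> nat \<Rightarrow> 'k::field) \<Rightarrow> (nat \<Rightarrow> nat set) \<Rightarrow> nat \<Rightarrow> bool" where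
  "trivial_left_kernel k V A l \<longleftrightarrow>
     (\<forall>w. (\<forall>p<k. (\<Sum>i<l. w i p) = 0) \<and> (\<forall>i<l. \<forall>j\<in>A i. (\<Sum>p<k. w i p * V p j) = 0)
        \<longrightarrow> (\<forall>i<l. \<forall>p<k. w i p = 0))"

definition block_offset :: "(nat \<Rightarrow> nat set) \<Rightarrow> nat \<Rightarrow> nat" where
  "block_offset A i = (\<Sum>t<i. card (A t))"

lemma block_offset_Suc: "block_offset A (Suc i) = block_offset A i + card (A i)"
  by (simp add: block_offset_def)

lemma block_offset_less:
  assumes "i < i'"
  shows "block_offset A i + card (A i) \<le> block_offset A i'"
proof -
  have "block_offset A (Suc i) \<le> block_offset A i'"
    unfolding block_offset_def using assms by (intro sum_mono2) auto
  then show ?thesis by (simp add: block_offset_Suc)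
qed

lemma block_offset_index:
  assumes "c < block_offset A l"
  obtains i q where "i < l" and "q < card (A i)" and "c = block_offset A i + q"
proof -
  have "\<exists>i<l. block_offset A i \<le> c \<and> c < block_offset A i + card (A i)"
    using assms
  proof (induction l)
    case (Suc l)
    then show ?case
      by (cases "c < block_offset A l") (auto simp: block_offset_Suc intro: less_SucI)
  qed (simp add: block_offset_def)
  then obtain i where "i < l" and "block_offset A i \<le> c" and "c < block_offset A i + card (A i)"
    by blast
  then show thesis
    using that[of i "c - block_offset A i"] by simp
qed

lemma sum_blocks:
  fixes l k :: nat and g :: "nat \<Rightarrow> 'a::comm_monoid_add"
  shows "(\<Sum>r<l * k. g r) = (\<Sum>i<l. \<Sum>p<k. g (i * k + p))"
proof (induction l)
  case (Suc l)
  have "(\<Sum>r<a + b. g r) = (\<Sum>r<a. g r) + (\<Sum>p<b. g (a + p))" for a b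
    by (induction b) (simp_all add: add.assoc)
  from this[of "l * k" k] show ?case
    using Suc by (simp add: add.commute)
qed simp

lemma gblock_entry:
  assumes "p < k"
  shows "gblock k V A (i * k + p) c =
    (if c < k then (if c = p then 1 else 0)
     else if block_offset A i \<le> c - k \<and> c - k < block_offset A i + card (A i)
     then V p (sorted_list_of_set (A i) ! (c - k - block_offset A i)) else 0)"
  using assms unfolding gblock_def restrict_cols_def Let_def block_offset_def by simp

lemma gblock_identity_column:
  fixes V :: "nat \<Rightarrow> nat \<Rightarrow> 'k::comm_ring_1"
  assumes "c < k"
  shows "(\<Sum>r<l * k. u r * gblock k V A r c) = (\<Sum>i<l. u (i * k + c))"
proof -
  have "(\<Sum>p<k. u (i * k + p) * gblock k V A (i * k + p) c) = (\<Sum>p<k. if p = c then u (i * k + p) else 0)" for i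
    using assms by (intro sum.cong) (auto simp: gblock_entry)
  then show ?thesis using assms by (simp add: sum_blocks)
qed

lemma gblock_block_column:
  fixes V :: "nat \<Rightarrow> nat \<Rightarrow> 'k::comm_ring_1"
  assumes "i < l" and "q < card (A i)"
  shows "(\<Sum>r<l * k. u r * gblock k V A r (k + block_offset A i + q))
    = (\<Sum>p<k. u (i * k + p) * V p (sorted_list_of_set (A i) ! q))"
proof -
  have other: "gblock k V A (i' * k + p) (k + block_offset A i + q) = 0" if "i' \<noteq> i" "p < k" for i' p
  proof -
    have "\<not> (block_offset A i' \<le> block_offset A i + q
            \<and> block_offset A i + q < block_offset A i' + card (A i'))"
      using block_offset_less[of i' i A] block_offset_less[of i i' A] assms(2) \<open>i' \<noteq> i\<close>
      by (cases "i' < i") auto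
    then show ?thesis using \<open>p < k\<close> by (auto simp: gblock_entry)
  qed
  have "(\<Sum>p<k. u (i * k + p) * gblock k V A (i * k + p) (k + block_offset A i + q))
      = (\<Sum>p<k. u (i * k + p) * V p (sorted_list_of_set (A i) ! q))"
    using assms(2) by (simp add: gblock_entry)
  moreover have "(\<Sum>p<k. u (i' * k + p) * gblock k V A (i' * k + p) (k + block_offset A i + q)) = 0"
    if "i' \<noteq> i" for i'
    using other[OF that] by simp
  ultimately show ?thesis
    unfolding sum_blocks using assms(1)
    by (subst sum.mono_neutral_right[of "{..<l}" "{i}"]) auto
qed

lemma sorted_list_of_set_index:
  assumes "finite S" and "j \<in> S"
  obtains q where "q < card S" and "sorted_list_of_set S ! q = j"
  using assms by (metis in_set_conv_nth length_sorted_list_of_set set_sorted_list_of_set)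

lemma sorted_list_of_set_nth_mem:
  assumes "finite S" and "q < card S"
  shows "sorted_list_of_set S ! q \<in> S"
  using assms by (metis length_sorted_list_of_set nth_mem set_sorted_list_of_set)

lemma all_less_block_columns_iff:
  "(\<forall>c<k + (\<Sum>i<l. card (A i)). P c) \<longleftrightarrow>
    (\<forall>c<k. P c) \<and> (\<forall>i<l. \<forall>q<card (A i). P (k + block_offset A i + q))"
proof safe
  fix i q
  assume "\<forall>c<k + (\<Sum>i<l. card (A i)). P c" and "i < l" and "q < card (A i)"
  moreover have "k + block_offset A i + q < k + (\<Sum>i<l. card (A i))"
    using block_offset_less[OF \<open>i < l\<close>, of A] \<open>q < card (A i)\<close> by (simp add: block_offset_def)
  ultimately show "P (k + block_offset A i + q)"
    by blast
next
  fix c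
  assume identity: "\<forall>c<k. P c" and blocks: "\<forall>i<l. \<forall>q<card (A i). P (k + block_offset A i + q)"
    and c: "c < k + (\<Sum>i<l. card (A i))"
  show "P c"
  proof (cases "c < k")
    case False
    then have "c - k < block_offset A l"
      using c by (simp add: block_offset_def)
    then obtain i q where "i < l" and "q < card (A i)" and "c - k = block_offset A i + q"
      by (rule block_offset_index)
    then show ?thesis
      using blocks False by (metis add.assoc le_add_diff_inverse not_less)
  qed (use identity in blast)
qed simp

lemma all_sorted_list_of_set_iff:
  assumes "finite S"
  shows "(\<forall>q<card S. Q (sorted_list_of_set S ! q)) \<longleftrightarrow> (\<forall>j\<in>S. Q j)"
  using assms sorted_list_of_set_index sorted_list_of_set_nth_mem by metis

lemma gblock_left_kernel_iff:
  fixes V :: "nat \<Rightarrow> nat \<Rightarrow> 'k::comm_ring_1"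
  assumes fin: "\<forall>i<l. finite (A i)"
  shows "(\<forall>c<k + (\<Sum>i<l. card (A i)). (\<Sum>r<l * k. u r * gblock k V A r c) = 0) \<longleftrightarrow>
    (\<forall>p<k. (\<Sum>i<l. u (i * k + p)) = 0) \<and> (\<forall>i<l. \<forall>j\<in>A i. (\<Sum>p<k. u (i * k + p) * V p j) = 0)"
proof -
  have "(\<forall>i<l. \<forall>q<card (A i). (\<Sum>r<l * k. u r * gblock k V A r (k + block_offset A i + q)) = 0)
      \<longleftrightarrow> (\<forall>i<l. \<forall>q<card (A i). (\<Sum>p<k. u (i * k + p) * V p (sorted_list_of_set (A i) ! q)) = 0)"
    by (simp add: gblock_block_column)
  also have "\<dots> \<longleftrightarrow> (\<forall>i<l. \<forall>j\<in>A i. (\<Sum>p<k. u (i * k + p) * V p j) = 0)"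
    using fin all_sorted_list_of_set_iff[of "A i" "\<lambda>j. (\<Sum>p<k. u (i * k + p) * V p j) = 0" for i]
    by blast
  moreover have "(\<forall>c<k. (\<Sum>r<l * k. u r * gblock k V A r c) = 0) \<longleftrightarrow> (\<forall>p<k. (\<Sum>i<l. u (i * k + p)) = 0)"
    by (simp add: gblock_identity_column)
  ultimately show ?thesis
    unfolding all_less_block_columns_iff by blast
qed

lemma all_less_mult_iff:
  fixes l k :: nat
  shows "(\<forall>r<l * k. P r) \<longleftrightarrow> (\<forall>i<l. \<forall>p<k. P (i * k + p))"
proof
  assume "\<forall>r<l * k. P r"
  moreover have "i * k + p < l * k" if "i < l" and "p < k" for i p
  proof -
    have "i * k + p < Suc i * k" using \<open>p < k\<close> by simp
    also have "\<dots> \<le> l * k" using \<open>i < l\<close> by (intro mult_right_mono) auto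
    finally show ?thesis .
  qed
  ultimately show "\<forall>i<l. \<forall>p<k. P (i * k + p)" by blast
next
  assume blocks: "\<forall>i<l. \<forall>p<k. P (i * k + p)"
  show "\<forall>r<l * k. P r"
  proof (intro allI impI)
    fix r
    assume "r < l * k"
    then have "0 < k"
      by (cases k) auto
    then have "r div k < l" and "r mod k < k"
      using \<open>r < l * k\<close> by (simp_all add: less_mult_imp_div_less)
    then have "P (r div k * k + r mod k)"
      using blocks by blast
    then show "P r" by simp
  qed
qed

lemma saturated_iff_trivial_left_kernel:
  fixes V :: "nat \<Rightarrow> nat \<Rightarrow> 'k::field"
  assumes "\<forall>i<l. finite (A i)"
  shows "saturated k V A l \<longleftrightarrow> trivial_left_kernel k V A l"
proof
  assume sat: "saturated k V A l"
  show "trivial_left_kernel k V A l"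
    unfolding trivial_left_kernel_def
  proof (intro allI impI)
    fix w i p
    assume w: "(\<forall>p<k. (\<Sum>i<l. w i p) = 0) \<and> (\<forall>i<l. \<forall>j\<in>A i. (\<Sum>p<k. w i p * V p j) = 0)"
      and "i < l" and "p < k"
    define u where "u r = w (r div k) (r mod k)" for r
    have u: "u (i * k + p) = w i p" if "p < k" for i p
      using that by (simp add: u_def)
    have "(\<Sum>i<l. u (i * k + p)) = (\<Sum>i<l. w i p)" if "p < k" for p
      using that by (simp add: u)
    moreover have "(\<Sum>p<k. u (i * k + p) * V p j) = (\<Sum>p<k. w i p * V p j)" for i j
      by (rule sum.cong) (simp_all add: u)
    ultimately have "\<forall>c<k + (\<Sum>i<l. card (A i)). (\<Sum>r<l * k. u r * gblock k V A r c) = 0"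
      using w by (simp add: gblock_left_kernel_iff[OF assms])
    then have "\<forall>r<l * k. u r = 0"
      using sat[unfolded saturated_def full_row_rank_def, rule_format, of u] by blast
    then show "w i p = 0"
      using \<open>i < l\<close> \<open>p < k\<close> by (simp add: all_less_mult_iff u)
  qed
next
  assume ker: "trivial_left_kernel k V A l"
  show "saturated k V A l"
    unfolding saturated_def full_row_rank_def
  proof (intro allI impI)
    fix u r
    assume "\<forall>c<k + (\<Sum>i<l. card (A i)). (\<Sum>r<l * k. u r * gblock k V A r c) = 0"
      and "r < l * k"
    then have "\<forall>i<l. \<forall>p<k. u (i * k + p) = 0"
      using ker[unfolded trivial_left_kernel_def, rule_format, of "\<lambda>i p. u (i * k + p)"]
      unfolding gblock_left_kernel_iff[OF assms] by blast
    then show "u r = 0"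
      using all_less_mult_iff[of l k "\<lambda>r. u r = 0"] \<open>r < l * k\<close> by blast
  qed
qed

section \<open>Exchanging two generic matrices\<close>

lemma lookup_map_key:
  assumes "inj f"
  shows "Poly_Mapping.lookup (Poly_Mapping.map_key f p) k = Poly_Mapping.lookup p (f k)"
  using map_key.rep_eq[OF assms, of p] by simp

lemma map_key_involution:
  assumes "\<And>x. f (f x) = x"
  shows "Poly_Mapping.map_key f (Poly_Mapping.map_key f p) = p"
proof -
  have "inj f" by (metis assms injI)
  then show ?thesis by (intro poly_mapping_eqI) (simp add: lookup_map_key assms)
qed

lemma map_key_mult:
  assumes f: "\<And>x. f (f x) = x" and add: "\<And>x y. f (x + y) = f x + f y"
  shows "Poly_Mapping.map_key f (p * q) = Poly_Mapping.map_key f p * Poly_Mapping.map_key f q"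
proof (rule poly_mapping_eqI)
  fix k
  have inj: "inj f" and bij: "bij f" by (metis f injI, metis f bij_betw_def injI surj_def)
  have cond: "f k = f l + f q' \<longleftrightarrow> k = l + q'" for l q' by (metis add f)
  have "Poly_Mapping.lookup (Poly_Mapping.map_key f (p * q)) k
      = (\<Sum>l. Poly_Mapping.lookup p l * (\<Sum>q'. Poly_Mapping.lookup q q' when f k = l + q'))"
    by (simp add: lookup_map_key[OF inj] lookup_mult)
  also have "\<dots> = (\<Sum>l. Poly_Mapping.lookup p (f l) * (\<Sum>q'. Poly_Mapping.lookup q q' when f k = f l + q'))"
    by (rule Sum_any.reindex_cong[OF bij]) auto
  also have "\<dots> = (\<Sum>l. Poly_Mapping.lookup p (f l) * (\<Sum>q'. Poly_Mapping.lookup q (f q') when k = l + q'))"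
    by (intro Sum_any.cong arg_cong[where f = "(*) _"] Sum_any.reindex_cong[OF bij])
      (auto simp: cond)
  also have "\<dots> = Poly_Mapping.lookup (Poly_Mapping.map_key f p * Poly_Mapping.map_key f q) k"
    by (simp add: lookup_map_key[OF inj] lookup_mult)
  finally show "Poly_Mapping.lookup (Poly_Mapping.map_key f (p * q)) k
      = Poly_Mapping.lookup (Poly_Mapping.map_key f p * Poly_Mapping.map_key f q) k" .
qed

definition rename_vars :: "('v \<Rightarrow> 'v) \<Rightarrow> (('v \<Rightarrow>\<^sub>0 nat) \<Rightarrow>\<^sub>0 'a::comm_ring_1) \<Rightarrow> ('v \<Rightarrow>\<^sub>0 nat) \<Rightarrow>\<^sub>0 'a" where
  "rename_vars \<pi> = Poly_Mapping.map_key (Poly_Mapping.map_key \<pi>)"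

context
  fixes \<pi> :: "'v::linorder \<Rightarrow> 'v"
  assumes involution: "\<And>v. \<pi> (\<pi> v) = v"
begin

lemma inj_involution: "inj \<pi>"
  by (metis involution injI)

lemma monomial_map_involution: "Poly_Mapping.map_key \<pi> (Poly_Mapping.map_key \<pi> m) = m"
  by (rule map_key_involution[OF involution])

lemma inj_monomial_map: "inj (Poly_Mapping.map_key \<pi>)"
  by (metis monomial_map_involution injI)

lemma rename_vars_involution: "rename_vars \<pi> (rename_vars \<pi> p) = p"
  unfolding rename_vars_def by (rule map_key_involution[OF monomial_map_involution])

lemma rename_vars_single:
  "rename_vars \<pi> (Poly_Mapping.single (Poly_Mapping.single v 1) c)
     = Poly_Mapping.single (Poly_Mapping.single (\<pi> v) 1) c"
proof -
  have "Poly_Mapping.single v (1::nat) = Poly_Mapping.map_key \<pi> (Poly_Mapping.single (\<pi> v) 1)"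
    using map_key_single[OF inj_involution, of v 1] by (rule sym)
  then show ?thesis
    unfolding rename_vars_def by (simp add: map_key_single[OF inj_monomial_map])
qed

lemma inj_idom_hom_rename_vars: "inj_idom_hom (rename_vars \<pi> :: _ \<Rightarrow> _ \<Rightarrow>\<^sub>0 'a::idom)"
proof
  fix p q :: "('v \<Rightarrow>\<^sub>0 nat) \<Rightarrow>\<^sub>0 'a"
  show "rename_vars \<pi> (p + q) = rename_vars \<pi> p + rename_vars \<pi> q"
    unfolding rename_vars_def by (rule map_key_plus[OF inj_monomial_map])
  show "rename_vars \<pi> (p * q) = rename_vars \<pi> p * rename_vars \<pi> q"
    unfolding rename_vars_def
    by (rule map_key_mult[OF monomial_map_involution map_key_plus[OF inj_involution]])
  show zero: "rename_vars \<pi> 0 = (0 :: _ \<Rightarrow>\<^sub>0 'a)"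
    unfolding rename_vars_def by (rule map_key_zero[OF inj_monomial_map])
  then show "rename_vars \<pi> p = 0 \<Longrightarrow> p = 0"
    by (metis rename_vars_involution)
  have "rename_vars \<pi> (Poly_Mapping.single (Poly_Mapping.map_key \<pi> 0) 1) = (Poly_Mapping.single 0 1 :: _ \<Rightarrow>\<^sub>0 'a)"
    unfolding rename_vars_def by (rule map_key_single[OF inj_monomial_map])
  then show "rename_vars \<pi> 1 = (1 :: _ \<Rightarrow>\<^sub>0 'a)"
    by (simp add: map_key_zero[OF inj_involution])
qed

end

(* Meaningful only for injective homomorphisms f, where the result does not depend on the
   chosen representative (map_fract_Fract); otherwise SOME picks an arbitrary one. *)
definition map_fract :: "('a::idom \<Rightarrow> 'b::idom) \<Rightarrow> 'a fract \<Rightarrow> 'b fract" where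
  "map_fract f x = (SOME y. \<exists>a b. b \<noteq> 0 \<and> x = Fraction_Field.Fract a b \<and> y = Fraction_Field.Fract (f a) (f b))"

context inj_idom_hom
begin

lemma map_fract_Fract:
  assumes "b \<noteq> 0"
  shows "map_fract hom (Fraction_Field.Fract a b) = Fraction_Field.Fract (hom a) (hom b)"
proof -
  let ?P = "\<lambda>y. \<exists>a' b'. b' \<noteq> 0 \<and> Fraction_Field.Fract a b = Fraction_Field.Fract a' b'
    \<and> y = Fraction_Field.Fract (hom a') (hom b')"
  have "?P (Fraction_Field.Fract (hom a) (hom b))"
    using assms by blast
  then have "?P (map_fract hom (Fraction_Field.Fract a b))"
    unfolding map_fract_def by (rule someI)
  then obtain a' b' where b': "b' \<noteq> 0" "Fraction_Field.Fract a b = Fraction_Field.Fract a' b'"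
    and map: "map_fract hom (Fraction_Field.Fract a b) = Fraction_Field.Fract (hom a') (hom b')"
    by blast
  from b' assms have "a * b' = a' * b" by (simp add: eq_fract)
  then have "hom a * hom b' = hom a' * hom b" by (metis hom_mult)
  then have "Fraction_Field.Fract (hom a) (hom b) = Fraction_Field.Fract (hom a') (hom b')"
    using b'(1) assms by (simp add: eq_fract)
  with map show ?thesis by simp
qed

lemma field_hom_map_fract: "field_hom (map_fract hom)"
proof
  fix x y :: "'a fract"
  obtain a b where x: "x = Fraction_Field.Fract a b" "b \<noteq> 0"
    by (cases x)
  obtain c d where y: "y = Fraction_Field.Fract c d" "d \<noteq> 0"
    by (cases y)
  show "map_fract hom (x + y) = map_fract hom x + map_fract hom y"
    using x y by (simp add: map_fract_Fract hom_add hom_mult)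
  show "map_fract hom (x * y) = map_fract hom x * map_fract hom y"
    using x y by (simp add: map_fract_Fract hom_mult)
next
  show "map_fract hom 1 = 1"
    by (simp add: One_fract_def map_fract_Fract)
  show "map_fract hom 0 = 0"
    by (simp add: Zero_fract_def map_fract_Fract)
qed

end

lemma map_fract_involution:
  assumes "inj_idom_hom f" and "\<And>x. f (f x) = x"
  shows "map_fract f (map_fract f x) = x"
proof -
  interpret inj_idom_hom f by fact
  obtain a b where "x = Fraction_Field.Fract a b" "b \<noteq> 0" by (cases x)
  then show ?thesis by (simp add: map_fract_Fract assms(2))
qed

lemma (in field_hom) full_row_rank_map:
  assumes "surj hom" and "full_row_rank M r c"
  shows "full_row_rank (\<lambda>i j. hom (M i j)) r c"
  unfolding full_row_rank_def
proof (intro allI impI)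
  fix u i
  assume ker: "\<forall>j<c. (\<Sum>i<r. u i * hom (M i j)) = 0" and "i < r"
  define v where "v i = inv_into UNIV hom (u i)" for i
  have u: "u i = hom (v i)" for i
    by (simp add: v_def surj_f_inv_f[OF assms(1)])
  have "hom (\<Sum>i<r. v i * M i j) = 0" if "j < c" for j
    using ker that by (simp add: u hom_sum hom_mult)
  then have "(\<Sum>i<r. v i * M i j) = 0" if "j < c" for j
    using that by simp
  then have "v i = 0"
    using assms(2) \<open>i < r\<close> unfolding full_row_rank_def by blast
  then show "u i = 0" by (simp add: u)
qed

lemma (in field_hom) saturated_map:
  assumes "surj hom" and "saturated k V A l"
  shows "saturated k (\<lambda>i j. hom (V i j)) A l"
proof -
  have "gblock k (\<lambda>i j. hom (V i j)) A = (\<lambda>r c. hom (gblock k V A r c))"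
    unfolding gblock_def restrict_cols_def Let_def by (intro ext) (simp add: if_distrib)
  then show ?thesis
    using full_row_rank_map[OF assms(1)] assms(2) unfolding saturated_def by simp
qed

(* The saturation property is stated for generic matrix 0, whereas MR patterns use generic
   matrix 1 for the row code; this automorphism exchanges their indeterminates. *)
definition swap_generic :: "'a::field gfield \<Rightarrow> 'a gfield" where
  "swap_generic = map_fract (rename_vars (apfst (Transposition.transpose 0 1)))"

lemma swap_generic_field_hom: "field_hom (swap_generic :: 'a::field gfield \<Rightarrow> _)"
  and swap_generic_involution: "swap_generic (swap_generic x) = (x :: 'a gfield)"
  and swap_generic_indet: "swap_generic (indet t i j :: 'a gfield) = indet (Transposition.transpose 0 1 t) i j"
proof -
  let ?\<pi> = "apfst (Transposition.transpose 0 1) :: nat \<times> nat \<times> nat \<Rightarrow> _"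
  have \<pi>: "?\<pi> (?\<pi> v) = v" for v by (cases v) simp
  interpret inj_idom_hom "rename_vars ?\<pi> :: _ \<Rightarrow> _ \<Rightarrow>\<^sub>0 'a"
    by (rule inj_idom_hom_rename_vars[OF \<pi>])
  show "field_hom (swap_generic :: 'a gfield \<Rightarrow> _)"
    unfolding swap_generic_def by (rule field_hom_map_fract)
  show "swap_generic (swap_generic x) = x"
    unfolding swap_generic_def
    by (rule map_fract_involution[OF inj_idom_hom_axioms rename_vars_involution[OF \<pi>]])
  show "swap_generic (indet t i j :: 'a gfield) = indet (Transposition.transpose 0 1 t) i j"
    unfolding swap_generic_def indet_def map_fract_Fract[OF one_neq_zero] rename_vars_single[OF \<pi>] hom_one
    by simp
qed

lemma saturated_generic_swap:
  "saturated k (generic 0 :: nat \<Rightarrow> nat \<Rightarrow> 'a::field gfield) A l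
     \<longleftrightarrow> saturated k (generic 1 :: nat \<Rightarrow> nat \<Rightarrow> 'a gfield) A l"
proof -
  interpret field_hom "swap_generic :: 'a gfield \<Rightarrow> _"
    by (rule swap_generic_field_hom)
  have surj: "surj (swap_generic :: 'a gfield \<Rightarrow> _)"
    by (metis swap_generic_involution surjI)
  have "(\<lambda>i j. swap_generic (generic t i j)) = (generic (Transposition.transpose 0 1 t) :: _ \<Rightarrow> _ \<Rightarrow> 'a gfield)" for t
    by (simp add: generic_def swap_generic_indet)
  then show ?thesis
    using saturated_map[OF surj, of k "generic 0" A l] saturated_map[OF surj, of k "generic 1" A l]
    by auto
qed

section \<open>Square matrices and generic matrices\<close>

definition mat_of_fun :: "(nat \<Rightarrow> nat \<Rightarrow> 'k) \<Rightarrow> nat \<Rightarrow> 'k mat" where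
  "mat_of_fun M r = mat r r (\<lambda>(p, q). M p q)"

lemma mat_of_fun_carrier: "mat_of_fun M r \<in> carrier_mat r r"
  by (simp add: mat_of_fun_def)

lemma mat_of_fun_mult_vec:
  fixes M :: "nat \<Rightarrow> nat \<Rightarrow> 'k::comm_ring_1"
  assumes "p < r"
  shows "(mat_of_fun M r *\<^sub>v vec r x) $ p = (\<Sum>q<r. M p q * x q)"
  using assms by (simp add: mat_of_fun_def scalar_prod_def lessThan_atLeast0)

lemma det_mat_of_fun_transpose:
  fixes M :: "nat \<Rightarrow> nat \<Rightarrow> 'k::comm_ring_1"
  shows "det (mat_of_fun (\<lambda>p q. M q p) r) = det (mat_of_fun M r)"
proof -
  have "mat_of_fun (\<lambda>p q. M q p) r = transpose_mat (mat_of_fun M r)"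
    by (rule eq_matI) (auto simp: mat_of_fun_def)
  then show ?thesis
    using det_transpose[OF mat_of_fun_carrier] by simp
qed

lemma full_row_rank_transpose_iff_det:
  fixes M :: "nat \<Rightarrow> nat \<Rightarrow> 'k::field"
  shows "full_row_rank (\<lambda>p q. M q p) r r \<longleftrightarrow> det (mat_of_fun M r) \<noteq> 0"
proof -
  have kernel: "mat_of_fun M r *\<^sub>v v = 0\<^sub>v r \<longleftrightarrow> (\<forall>p<r. (\<Sum>q<r. v $ q * M p q) = 0)"
    if "v \<in> carrier_vec r" for v
  proof -
    have "v = vec r (\<lambda>q. v $ q)" using that by auto
    then have "(mat_of_fun M r *\<^sub>v v) $ p = (\<Sum>q<r. v $ q * M p q)" if "p < r" for p
      using mat_of_fun_mult_vec[OF that, of M "\<lambda>q. v $ q"] by (simp add: mult.commute)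
    then show ?thesis
      by (auto simp: vec_eq_iff mat_of_fun_def)
  qed
  have "det (mat_of_fun M r) = 0 \<longleftrightarrow> (\<exists>u. (\<forall>p<r. (\<Sum>q<r. u q * M p q) = 0) \<and> (\<exists>q<r. u q \<noteq> 0))"
  proof
    assume "det (mat_of_fun M r) = 0"
    then obtain v where v: "v \<in> carrier_vec r" "v \<noteq> 0\<^sub>v r" "mat_of_fun M r *\<^sub>v v = 0\<^sub>v r"
      using det_0_iff_vec_prod_zero_field[OF mat_of_fun_carrier] by blast
    then have "\<exists>q<r. v $ q \<noteq> 0"
      by (metis eq_vecI index_zero_vec(1,2) carrier_vecD)
    then show "\<exists>u. (\<forall>p<r. (\<Sum>q<r. u q * M p q) = 0) \<and> (\<exists>q<r. u q \<noteq> 0)"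
      using kernel[OF v(1)] v(3) by blast
  next
    assume "\<exists>u. (\<forall>p<r. (\<Sum>q<r. u q * M p q) = 0) \<and> (\<exists>q<r. u q \<noteq> 0)"
    then obtain u where u: "\<forall>p<r. (\<Sum>q<r. u q * M p q) = 0" "\<exists>q<r. u q \<noteq> 0"
      by blast
    have "vec r u \<in> carrier_vec r" and "vec r u \<noteq> 0\<^sub>v r" and "mat_of_fun M r *\<^sub>v vec r u = 0\<^sub>v r"
      using u kernel[of "vec r u"] by (auto simp: vec_eq_iff)
    then show "det (mat_of_fun M r) = 0"
      using det_0_iff_vec_prod_zero_field[OF mat_of_fun_carrier] by blast
  qed
  then show ?thesis
    unfolding full_row_rank_def by blast
qed

lemma full_row_rank_square_iff_det:
  fixes M :: "nat \<Rightarrow> nat \<Rightarrow> 'k::field"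
  shows "full_row_rank M r r \<longleftrightarrow> det (mat_of_fun M r) \<noteq> 0"
  using full_row_rank_transpose_iff_det[of "\<lambda>p q. M q p" r] det_mat_of_fun_transpose[of M r]
  by argo

lemma full_row_rank_square_transpose:
  fixes M :: "nat \<Rightarrow> nat \<Rightarrow> 'k::field"
  shows "full_row_rank (\<lambda>p q. M q p) r r \<longleftrightarrow> full_row_rank M r r"
  using full_row_rank_transpose_iff_det[of M r] full_row_rank_square_iff_det[of M r] by blast

lemma full_row_rank_square_solvable:
  fixes M :: "nat \<Rightarrow> nat \<Rightarrow> 'k::field"
  assumes "full_row_rank M r r"
  obtains c where "\<forall>q<r. (\<Sum>p<r. c p * M p q) = y q"
proof -
  let ?A = "mat_of_fun (\<lambda>p q. M q p) r"
  have "det ?A \<noteq> 0"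
    using assms full_row_rank_transpose_iff_det[of "\<lambda>p q. M q p" r] by simp
  then have "?A \<in> Units (ring_mat TYPE('k) r ())"
    by (rule det_non_zero_imp_unit[OF mat_of_fun_carrier])
  then obtain B where B: "B \<in> carrier_mat r r" "?A * B = 1\<^sub>m r"
    unfolding Units_def ring_mat_def by auto
  define x where "x = B *\<^sub>v vec r y"
  have x: "x = vec r (\<lambda>p. x $ p)"
    using B(1) by (auto simp: x_def)
  have "?A *\<^sub>v x = (?A * B) *\<^sub>v vec r y"
    unfolding x_def by (rule assoc_mult_mat_vec[symmetric, OF mat_of_fun_carrier B(1)]) simp
  also have "\<dots> = vec r y"
    using B(2) by simp
  finally have "?A *\<^sub>v vec r (\<lambda>p. x $ p) = vec r y"
    using x by simp
  then have "\<forall>q<r. (\<Sum>p<r. M p q * x $ p) = y q"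
    using mat_of_fun_mult_vec[of _ r "\<lambda>p q. M q p" "\<lambda>p. x $ p"] by (metis index_vec)
  then show ?thesis
    using that[of "\<lambda>p. x $ p"] by (simp add: mult.commute)
qed

lemma prod_single_one:
  "(\<Prod>i\<in>I. Poly_Mapping.single (f i) (1::'a::comm_ring_1)) = Poly_Mapping.single (\<Sum>i\<in>I. f i) 1"
  by (induction I rule: infinite_finite_induct) (simp_all add: mult_single)

lemma permutation_monomial_eq_id:
  fixes v :: "nat \<Rightarrow> nat \<Rightarrow> 'v"
  assumes inj: "inj_on (\<lambda>(p, q). v p q) ({..<r} \<times> {..<r})" and \<pi>: "\<pi> permutes {0..<r}"
    and eq: "(\<Sum>i\<in>{0..<r}. Poly_Mapping.single (v i (\<pi> i)) (1::nat))
      = (\<Sum>i\<in>{0..<r}. Poly_Mapping.single (v i i) 1)"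
  shows "\<pi> = id"
proof
  fix i
  have count: "Poly_Mapping.lookup (\<Sum>i\<in>{0..<r}. Poly_Mapping.single (v i (\<sigma> i)) (1::nat)) m
      = card {i\<in>{0..<r}. v i (\<sigma> i) = m}" for \<sigma> m
    by (simp add: lookup_sum lookup_single when_def sum.If_cases Int_def)
  show "\<pi> i = id i"
  proof (cases "i < r")
    case True
    have "\<pi> i < r"
      using permutes_in_image[OF \<pi>, of i] True by simp
    have "card {i'\<in>{0..<r}. v i' (\<pi> i') = v i (\<pi> i)} \<noteq> 0"
      using True by (subst card_0_eq) auto
    then have "card {i'\<in>{0..<r}. v i' i' = v i (\<pi> i)} \<noteq> 0"
      using count[of \<pi> "v i (\<pi> i)"] count[of id "v i (\<pi> i)"] eq by simp
    then obtain i' where "i' < r" "v i' i' = v i (\<pi> i)"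
      by (metis (mono_tags, lifting) card.empty empty_Collect_eq atLeastLessThan_iff)
    then show ?thesis
      using inj_onD[OF inj, of "(i', i')" "(i, \<pi> i)"] True \<open>\<pi> i < r\<close> by auto
  next
    case False
    then show ?thesis using \<pi> by (simp add: permutes_def)
  qed
qed

lemma det_indeterminates_ne_zero:
  fixes v :: "nat \<Rightarrow> nat \<Rightarrow> 'v"
  assumes inj: "inj_on (\<lambda>(p, q). v p q) ({..<r} \<times> {..<r})"
  shows "det (mat_of_fun (\<lambda>p q. Poly_Mapping.single (Poly_Mapping.single (v p q) (1::nat)) (1::'a::field)) r) \<noteq> 0"
proof -
  let ?X = "\<lambda>p q. Poly_Mapping.single (Poly_Mapping.single (v p q) (1::nat)) (1::'a)"
  let ?P = "{\<pi>. \<pi> permutes {0..<r}}"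
  define mon where "mon \<pi> = (\<Sum>i\<in>{0..<r}. Poly_Mapping.single (v i (\<pi> i)) (1::nat))" for \<pi>
  have "signof \<pi> * (\<Prod>i = 0..<r. mat_of_fun ?X r $$ (i, \<pi> i)) = Poly_Mapping.single (mon \<pi>) (signof \<pi>)"
    if "\<pi> \<in> ?P" for \<pi>
  proof -
    have "(\<Prod>i = 0..<r. mat_of_fun ?X r $$ (i, \<pi> i)) = (\<Prod>i = 0..<r. ?X i (\<pi> i))"
      using permutes_in_image[of \<pi> "{0..<r}"] that by (intro prod.cong) (auto simp: mat_of_fun_def)
    then show ?thesis
      by (simp add: prod_single_one mon_def mult_single flip: single_of_int)
  qed
  then have det: "det (mat_of_fun ?X r) = (\<Sum>\<pi>\<in>?P. Poly_Mapping.single (mon \<pi>) (signof \<pi>))"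
    unfolding det_def'[OF mat_of_fun_carrier] by (rule sum.cong[OF refl])
  have mon_eq_id: "\<pi> = id" if "\<pi> permutes {0..<r}" and "mon \<pi> = mon id" for \<pi>
    using permutation_monomial_eq_id[OF inj that(1)] that(2) by (simp add: mon_def)
  have "Poly_Mapping.lookup (det (mat_of_fun ?X r)) (mon id) = (\<Sum>\<pi>\<in>?P. if \<pi> = id then signof \<pi> else 0)"
    unfolding det lookup_sum
    by (intro sum.cong) (auto simp: lookup_single when_def dest: mon_eq_id)
  also have "\<dots> = (1::'a)"
    using permutes_id[of "{0..<r}"] by (simp add: finite_permutations)
  finally have lookup_det: "Poly_Mapping.lookup (det (mat_of_fun ?X r)) (mon id) = 1" .
  show ?thesis
  proof
    assume "det (mat_of_fun ?X r) = 0"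
    then have "Poly_Mapping.lookup (det (mat_of_fun ?X r)) (mon id) = 0"
      by (simp only: lookup_zero)
    with lookup_det show False
      by simp
  qed
qed

lemma full_row_rank_of_restrict_cols:
  assumes "S \<subseteq> {..<c}" and "finite S" and "full_row_rank (restrict_cols M S) r (card S)"
  shows "full_row_rank M r c"
  unfolding full_row_rank_def
proof (intro allI impI)
  fix u i
  assume cols: "\<forall>j<c. (\<Sum>i<r. u i * M i j) = 0" and "i < r"
  have "sorted_list_of_set S ! q < c" if "q < card S" for q
    using sorted_list_of_set_nth_mem[OF assms(2) that] assms(1) by auto
  then have "\<forall>q<card S. (\<Sum>i<r. u i * restrict_cols M S i q) = 0"
    using cols by (simp add: restrict_cols_def)
  then show "u i = 0"
    using assms(3) \<open>i < r\<close> unfolding full_row_rank_def by blast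
qed

lemma full_row_rank_restrict_generic:
  assumes "finite S" and "card S = r"
  shows "full_row_rank (restrict_cols (generic t :: nat \<Rightarrow> nat \<Rightarrow> 'a::field gfield) S) r r"
proof -
  let ?s = "sorted_list_of_set S"
  let ?X = "\<lambda>p q. Poly_Mapping.single (Poly_Mapping.single (t, p, ?s ! q) (1::nat)) (1::'a)"
  interpret to_fract: inj_comm_ring_hom "to_fract :: ((nat \<times> nat \<times> nat \<Rightarrow>\<^sub>0 nat) \<Rightarrow>\<^sub>0 'a) \<Rightarrow> _"
    by unfold_locales auto
  have "mat_of_fun (restrict_cols (generic t) S) r = map_mat to_fract (mat_of_fun ?X r)"
    by (rule eq_matI) (auto simp: mat_of_fun_def restrict_cols_def generic_def indet_def to_fract_def)
  moreover have "det (mat_of_fun ?X r) \<noteq> 0"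
    using assms nth_eq_iff_index_eq[OF distinct_sorted_list_of_set[of S]]
    by (intro det_indeterminates_ne_zero) (auto simp: inj_on_def)
  ultimately show ?thesis
    by (simp add: full_row_rank_square_iff_det to_fract.hom_det)
qed

lemma full_row_rank_generic:
  assumes "k \<le> n"
  shows "full_row_rank (generic t :: nat \<Rightarrow> nat \<Rightarrow> 'a::field gfield) k n"
  by (rule full_row_rank_of_restrict_cols[of "{..<k}"])
    (use assms full_row_rank_restrict_generic[of "{..<k}" k t] in auto)

lemma is_MDS_generic:
  assumes "k \<le> n"
  shows "is_MDS (generic t :: nat \<Rightarrow> nat \<Rightarrow> 'a::field gfield) n k"
proof -
  have "full_row_rank (restrict_cols (generic t :: nat \<Rightarrow> nat \<Rightarrow> 'a gfield) S) k k"
    if "S \<subseteq> {..<n}" and "card S = k" for S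
    using that finite_subset[OF that(1)] by (simp add: full_row_rank_restrict_generic)
  then show ?thesis
    using assms full_row_rank_generic[OF assms] by (simp add: is_MDS_def is_code_def)
qed

section \<open>Parity checks of MDS codes of redundancy one\<close>

definition parity_check :: "(nat \<Rightarrow> nat \<Rightarrow> 'k::field) \<Rightarrow> nat \<Rightarrow> nat \<Rightarrow> (nat \<Rightarrow> 'k) \<Rightarrow> bool" where
  "parity_check G k m h \<longleftrightarrow> (\<forall>x. in_code G k m x \<longleftrightarrow> (\<Sum>i<m. h i * x i) = 0)"

lemma sum_sorted_list_of_set:
  assumes "finite S"
  shows "(\<Sum>q<card S. f (sorted_list_of_set S ! q)) = (\<Sum>j\<in>S. f j)"
  using sum.reindex_bij_betw[OF bij_betw_nth[of "sorted_list_of_set S" "{..<card S}" S]] assms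
  by simp

lemma restrict_cols_lessThan: "q < r \<Longrightarrow> restrict_cols W {..<r} p q = W p q"
  by (simp add: restrict_cols_def lessThan_atLeast0)

lemma MDS_orthogonal_zero_entry_imp_zero:
  fixes W :: "nat \<Rightarrow> nat \<Rightarrow> 'k::field"
  assumes MDS: "is_MDS W m (m - 1)" and orth: "\<forall>p<m - 1. (\<Sum>j<m. W p j * h j) = 0"
    and "i < m" and "h i = 0"
  shows "\<forall>j<m. h j = 0"
proof (intro allI impI)
  fix j
  assume "j < m"
  define S where "S = {..<m} - {i}"
  let ?s = "sorted_list_of_set S"
  have S: "finite S" "S \<subseteq> {..<m}" "card S = m - 1"
    using \<open>i < m\<close> by (auto simp: S_def)
  then have "full_row_rank (restrict_cols W S) (m - 1) (m - 1)"
    using MDS unfolding is_MDS_def by blast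
  then have right_kernel: "full_row_rank (\<lambda>q p. restrict_cols W S p q) (m - 1) (m - 1)"
    by (rule full_row_rank_square_transpose[THEN iffD2])
  have "(\<Sum>q<m - 1. h (?s ! q) * restrict_cols W S p q) = 0" if "p < m - 1" for p
  proof -
    have "(\<Sum>q<m - 1. h (?s ! q) * restrict_cols W S p q) = (\<Sum>j\<in>S. W p j * h j)"
      using sum_sorted_list_of_set[OF S(1), of "\<lambda>j. W p j * h j"] S(3)
      by (simp add: restrict_cols_def mult.commute)
    also have "\<dots> = (\<Sum>j<m. W p j * h j) - W p i * h i"
      using \<open>i < m\<close> by (simp add: S_def sum_diff1)
    finally show ?thesis
      using orth that \<open>h i = 0\<close> by simp
  qed
  then have h_S: "h (?s ! q) = 0" if "q < m - 1" for q
    using right_kernel[unfolded full_row_rank_def, rule_format, of "\<lambda>q. h (?s ! q)"] that by blast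
  show "h j = 0"
  proof (cases "j = i")
    case False
    then have "j \<in> S"
      using \<open>j < m\<close> by (simp add: S_def)
    then obtain q where "q < card S" and "?s ! q = j"
      by (rule sorted_list_of_set_index[OF S(1)])
    then show ?thesis
      using h_S S(3) by metis
  qed (use \<open>h i = 0\<close> in simp)
qed

lemma parity_check_of_orthogonal:
  fixes W :: "nat \<Rightarrow> nat \<Rightarrow> 'k::field"
  assumes rank: "full_row_rank (restrict_cols W {..<r}) r r"
    and orth: "\<forall>p<r. (\<Sum>j<Suc r. W p j * h j) = 0" and "h r \<noteq> 0"
  shows "parity_check W r (Suc r) h"
proof -
  have codeword_orth: "(\<Sum>i<Suc r. h i * (\<Sum>p<r. c p * W p i)) = 0" for c
  proof -
    have "(\<Sum>i<Suc r. h i * (\<Sum>p<r. c p * W p i)) = (\<Sum>i<Suc r. \<Sum>p<r. c p * (W p i * h i))"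
      by (simp add: sum_distrib_left mult_ac)
    also have "\<dots> = (\<Sum>p<r. c p * (\<Sum>i<Suc r. W p i * h i))"
      by (subst sum.swap) (simp only: sum_distrib_left)
    also have "\<dots> = 0"
      using orth by simp
    finally show ?thesis .
  qed
  show ?thesis
    unfolding parity_check_def in_code_def
  proof (intro allI iffI)
    fix x :: "nat \<Rightarrow> 'k"
    assume "\<exists>c. \<forall>j<Suc r. x j = (\<Sum>p<r. c p * W p j)"
    then obtain c where "\<forall>j<Suc r. x j = (\<Sum>p<r. c p * W p j)"
      by blast
    then show "(\<Sum>i<Suc r. h i * x i) = 0"
      using codeword_orth[of c] by simp
  next
    fix x :: "nat \<Rightarrow> 'k"
    assume x: "(\<Sum>i<Suc r. h i * x i) = 0"
    obtain c where c: "\<forall>q<r. (\<Sum>p<r. c p * W p q) = x q"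
      using full_row_rank_square_solvable[OF rank, of x] by (auto simp: restrict_cols_lessThan)
    define y where "y j = x j - (\<Sum>p<r. c p * W p j)" for j
    have "(\<Sum>i<Suc r. h i * y i) = 0"
      using x codeword_orth[of c] by (simp add: y_def right_diff_distrib sum_subtractf)
    moreover have "(\<Sum>i<r. h i * y i) = 0"
      using c by (simp add: y_def)
    ultimately have "y r = 0"
      using \<open>h r \<noteq> 0\<close> by simp
    then have "\<forall>j<Suc r. x j = (\<Sum>p<r. c p * W p j)"
      using c by (auto simp: y_def less_Suc_eq)
    then show "\<exists>c. \<forall>j<Suc r. x j = (\<Sum>p<r. c p * W p j)"
      by (rule exI[of _ c])
  qed
qed

lemma MDS_parity_check:
  fixes W :: "nat \<Rightarrow> nat \<Rightarrow> 'k::field"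
  assumes "1 \<le> m" and MDS: "is_MDS W m (m - 1)"
  obtains h where "parity_check W (m - 1) m h" and "\<forall>i<m. h i \<noteq> 0"
proof -
  obtain r where m: "m = Suc r" and r: "m - 1 = r"
    using assms(1) by (cases m) auto
  have rank: "full_row_rank (restrict_cols W {..<r}) r r"
    using MDS m unfolding is_MDS_def by auto
  then have "full_row_rank (\<lambda>q p. restrict_cols W {..<r} p q) r r"
    by (rule full_row_rank_square_transpose[THEN iffD2])
  then obtain \<mu> where "\<forall>p<r. (\<Sum>q<r. \<mu> q * restrict_cols W {..<r} p q) = W p r"
    by (rule full_row_rank_square_solvable)
  then have last_column: "\<forall>p<r. (\<Sum>q<r. \<mu> q * W p q) = W p r"
    by (simp add: restrict_cols_lessThan)
  define h where "h j = (if j < r then \<mu> j else -1)" for j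
  have orth: "\<forall>p<r. (\<Sum>j<m. W p j * h j) = 0"
    using last_column by (simp add: m h_def mult.commute)
  have parity: "parity_check W r m h"
    unfolding m by (rule parity_check_of_orthogonal[OF rank orth[unfolded m]]) (simp add: h_def)
  have "\<forall>i<m. h i \<noteq> 0"
  proof (intro allI impI notI)
    fix i
    assume "i < m" and "h i = 0"
    have "\<forall>j<m. h j = 0"
      using orth unfolding r[symmetric]
      by (rule MDS_orthogonal_zero_entry_imp_zero[where h = h, OF MDS _ \<open>i < m\<close> \<open>h i = 0\<close>])
    then have "h r = 0"
      using m by simp
    then show False
      by (simp add: h_def)
  qed
  with parity r show thesis
    using that by simp
qed

section \<open>Correctable patterns of tensor codes\<close>

definition unerased :: "nat \<Rightarrow> (nat \<times> nat) set \<Rightarrow> nat \<Rightarrow> nat set" where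
  "unerased n E i = {j. j < n \<and> (i, j) \<notin> E}"

lemma in_code_diff:
  assumes "in_code G k n x" and "in_code G k n y"
  shows "in_code G k n (\<lambda>j. x j - y j)"
proof -
  obtain c d where "\<forall>j<n. x j = (\<Sum>i<k. c i * G i j)" and "\<forall>j<n. y j = (\<Sum>i<k. d i * G i j)"
    using assms unfolding in_code_def by blast
  then have "\<forall>j<n. x j - y j = (\<Sum>i<k. (c i - d i) * G i j)"
    by (simp add: sum_subtractf left_diff_distrib)
  then show ?thesis unfolding in_code_def by (rule exI[of _ "\<lambda>i. c i - d i"])
qed

lemma tensor_cw_diff:
  assumes "tensor_cw G1 k1 G2 k2 m n X" and "tensor_cw G1 k1 G2 k2 m n Y"
  shows "tensor_cw G1 k1 G2 k2 m n (\<lambda>i j. X i j - Y i j)"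
  using assms unfolding tensor_cw_def by (simp add: in_code_diff)

lemma correctable_iff_no_codeword_supported_on:
  "correctable G1 k1 G2 k2 m n E \<longleftrightarrow>
    (\<forall>Z. tensor_cw G1 k1 G2 k2 m n Z \<and> (\<forall>i<m. \<forall>j<n. (i, j) \<notin> E \<longrightarrow> Z i j = 0)
       \<longrightarrow> (\<forall>i<m. \<forall>j<n. Z i j = 0))"
proof
  assume corr: "correctable G1 k1 G2 k2 m n E"
  have zero_cw: "tensor_cw G1 k1 G2 k2 m n (\<lambda>i j. 0)"
    unfolding tensor_cw_def in_code_def by (auto intro: exI[of _ "\<lambda>_. 0"])
  show "\<forall>Z. tensor_cw G1 k1 G2 k2 m n Z \<and> (\<forall>i<m. \<forall>j<n. (i, j) \<notin> E \<longrightarrow> Z i j = 0)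
       \<longrightarrow> (\<forall>i<m. \<forall>j<n. Z i j = 0)"
  proof (intro allI impI)
    fix Z i j
    assume "tensor_cw G1 k1 G2 k2 m n Z \<and> (\<forall>i<m. \<forall>j<n. (i, j) \<notin> E \<longrightarrow> Z i j = 0)"
      and "i < m" and "j < n"
    then show "Z i j = 0"
      using corr[unfolded correctable_def, rule_format, of Z "\<lambda>i j. 0"] zero_cw by simp
  qed
next
  assume zero: "\<forall>Z. tensor_cw G1 k1 G2 k2 m n Z \<and> (\<forall>i<m. \<forall>j<n. (i, j) \<notin> E \<longrightarrow> Z i j = 0)
       \<longrightarrow> (\<forall>i<m. \<forall>j<n. Z i j = 0)"
  show "correctable G1 k1 G2 k2 m n E"
    unfolding correctable_def
  proof (intro allI impI)
    fix X Y i j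
    assume "tensor_cw G1 k1 G2 k2 m n X \<and> tensor_cw G1 k1 G2 k2 m n Y
      \<and> (\<forall>i<m. \<forall>j<n. (i, j) \<notin> E \<longrightarrow> X i j = Y i j)"
      and "i < m" and "j < n"
    then show "X i j = Y i j"
      using zero[rule_format, of "\<lambda>i j. X i j - Y i j"] tensor_cw_diff[of G1 k1 G2 k2 m n X Y] by simp
  qed
qed

lemma tensor_cw_parity_check:
  assumes "parity_check G1 k1 m h"
  shows "tensor_cw G1 k1 G2 k2 m n Z \<longleftrightarrow>
    (\<forall>j<n. (\<Sum>i<m. h i * Z i j) = 0) \<and> (\<forall>i<m. in_code G2 k2 n (\<lambda>j. Z i j))"
  using assms unfolding tensor_cw_def parity_check_def by simp

lemma tensor_cw_row_coefficients:
  assumes "tensor_cw G1 k1 G2 k2 m n Z"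
  obtains e where "\<forall>i<m. \<forall>j<n. Z i j = (\<Sum>p<k2. e i p * G2 p j)"
proof -
  have "\<forall>i\<in>{..<m}. \<exists>c. \<forall>j<n. Z i j = (\<Sum>p<k2. c p * G2 p j)"
    using assms by (simp add: tensor_cw_def in_code_def)
  then obtain e where "\<forall>i\<in>{..<m}. \<forall>j<n. Z i j = (\<Sum>p<k2. e i p * G2 p j)"
    by (rule bchoice[THEN exE])
  then have "\<forall>i<m. \<forall>j<n. Z i j = (\<Sum>p<k2. e i p * G2 p j)"
    by simp
  then show thesis
    by (rule that)
qed

lemma parity_combination_kernel:
  fixes G1 G2 :: "nat \<Rightarrow> nat \<Rightarrow> 'k::field"
  assumes "parity_check G1 k1 m h" and "tensor_cw G1 k1 G2 k2 m n Z"
    and e: "\<forall>i<m. \<forall>j<n. Z i j = (\<Sum>p<k2. e i p * G2 p j)" and "j < n"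
  shows "(\<Sum>p<k2. (\<Sum>i<m. h i * e i p) * G2 p j) = 0"
proof -
  have "(\<Sum>p<k2. (\<Sum>i<m. h i * e i p) * G2 p j) = (\<Sum>i<m. h i * (\<Sum>p<k2. e i p * G2 p j))"
    by (simp add: sum_distrib_left sum_distrib_right sum.swap[of _ "{..<k2}"] mult.assoc)
  also have "\<dots> = (\<Sum>i<m. h i * Z i j)"
    using e \<open>j < n\<close> by simp
  also have "\<dots> = 0"
    using assms(1,2) \<open>j < n\<close> by (simp add: tensor_cw_parity_check)
  finally show ?thesis .
qed

lemma trivial_left_kernel_imp_correctable:
  fixes G1 G2 :: "nat \<Rightarrow> nat \<Rightarrow> 'k::field"
  assumes "1 \<le> m" and h: "parity_check G1 k1 m h" and h_nz: "\<forall>i<m. h i \<noteq> 0"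
    and ker: "trivial_left_kernel k2 G2 (unerased n E) m"
  shows "correctable G1 k1 G2 k2 m n E"
  unfolding correctable_iff_no_codeword_supported_on
proof (intro allI impI)
  fix Z i j
  assume Z: "tensor_cw G1 k1 G2 k2 m n Z \<and> (\<forall>i<m. \<forall>j<n. (i, j) \<notin> E \<longrightarrow> Z i j = 0)"
    and "i < m" and "j < n"
  then obtain e where e: "\<forall>i<m. \<forall>j<n. Z i j = (\<Sum>p<k2. e i p * G2 p j)"
    using tensor_cw_row_coefficients by blast
  define t where "t p = (\<Sum>i<m. h i * e i p)" for p
  have t_G2: "(\<Sum>p<k2. t p * G2 p j) = 0" if "j < n" for j
    unfolding t_def using parity_combination_kernel[OF h _ e that] Z by blast
  \<comment> \<open>Since t G2 = 0, subtracting t from the last block keeps every block orthogonal to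
    the unerased columns of its row and makes the blocks sum to zero.\<close>
  define w where "w i p = h i * e i p - (if i = m - 1 then t p else 0)" for i p
  have "(\<Sum>i<m. w i p) = 0" for p
    using \<open>1 \<le> m\<close> by (simp add: w_def sum_subtractf t_def)
  moreover have "(\<Sum>p<k2. w i p * G2 p j) = 0" if "i < m" and "j \<in> unerased n E i" for i j
  proof -
    have "j < n" and "Z i j = 0"
      using that Z by (auto simp: unerased_def)
    have "(\<Sum>p<k2. w i p * G2 p j)
        = h i * Z i j - (if i = m - 1 then \<Sum>p<k2. t p * G2 p j else 0)"
      using e that(1) \<open>j < n\<close>
      by (cases "i = m - 1") (simp_all add: w_def left_diff_distrib sum_subtractf sum_distrib_left mult.assoc)
    then show ?thesis
      using \<open>Z i j = 0\<close> t_G2[OF \<open>j < n\<close>] by simp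
  qed
  ultimately have "\<forall>i<m. \<forall>p<k2. w i p = 0"
    using ker[unfolded trivial_left_kernel_def, rule_format, of w] by blast
  then have he: "h i * e i p = (if i = m - 1 then t p else 0)" if "p < k2" for p
    using \<open>i < m\<close> that by (simp add: w_def)
  have "h i * Z i j = (\<Sum>p<k2. (h i * e i p) * G2 p j)"
    using e \<open>i < m\<close> \<open>j < n\<close> by (simp add: sum_distrib_left mult.assoc)
  also have "\<dots> = (\<Sum>p<k2. (if i = m - 1 then t p else 0) * G2 p j)"
    by (rule sum.cong) (simp_all add: he)
  also have "\<dots> = 0"
    using t_G2[OF \<open>j < n\<close>] by (cases "i = m - 1") simp_all
  finally show "Z i j = 0"
    using h_nz \<open>i < m\<close> by simp
qed

lemma correctable_imp_trivial_left_kernel: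
  fixes G1 G2 :: "nat \<Rightarrow> nat \<Rightarrow> 'k::field"
  assumes h: "parity_check G1 k1 m h" and h_nz: "\<forall>i<m. h i \<noteq> 0"
    and G2: "full_row_rank G2 k2 n"
    and corr: "correctable G1 k1 G2 k2 m n E"
  shows "trivial_left_kernel k2 G2 (unerased n E) m"
  unfolding trivial_left_kernel_def
proof (intro allI impI)
  fix w i p
  assume w: "(\<forall>p<k2. (\<Sum>i<m. w i p) = 0) \<and> (\<forall>i<m. \<forall>j\<in>unerased n E i. (\<Sum>p<k2. w i p * G2 p j) = 0)"
    and "i < m" and "p < k2"
  define Z where "Z i j = (\<Sum>p<k2. w i p / h i * G2 p j)" for i j
  have "(\<Sum>i<m. h i * Z i j) = 0" for j
  proof -
    have "(\<Sum>i<m. h i * Z i j) = (\<Sum>i<m. \<Sum>p<k2. w i p * G2 p j)"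
      using h_nz by (intro sum.cong) (simp_all add: Z_def sum_distrib_left)
    also have "\<dots> = (\<Sum>p<k2. (\<Sum>i<m. w i p) * G2 p j)"
      by (simp add: sum.swap[of _ "{..<m}"] sum_distrib_right)
    also have "\<dots> = 0"
      using w by simp
    finally show ?thesis .
  qed
  moreover have "in_code G2 k2 n (\<lambda>j. Z i j)" for i
    unfolding in_code_def Z_def by (rule exI[of _ "\<lambda>p. w i p / h i"]) simp
  moreover have "Z i j = 0" if "i < m" and "j < n" and "(i, j) \<notin> E" for i j
  proof -
    have "Z i j = (\<Sum>p<k2. w i p * G2 p j) / h i"
      by (simp add: Z_def sum_divide_distrib)
    then show ?thesis
      using w that by (simp add: unerased_def)
  qed
  ultimately have "\<forall>j<n. Z i j = 0"
    using corr \<open>i < m\<close> h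
    unfolding correctable_iff_no_codeword_supported_on tensor_cw_parity_check[OF h] by blast
  then have "w i p / h i = 0"
    using G2[unfolded full_row_rank_def, rule_format, of "\<lambda>p. w i p / h i"] \<open>p < k2\<close>
    by (simp add: Z_def)
  then show "w i p = 0"
    using h_nz \<open>i < m\<close> by simp
qed

lemma correctable_iff_trivial_left_kernel:
  fixes G1 G2 :: "nat \<Rightarrow> nat \<Rightarrow> 'k::field"
  assumes "1 \<le> m" and "parity_check G1 k1 m h" and "\<forall>i<m. h i \<noteq> 0"
    and "full_row_rank G2 k2 n"
  shows "correctable G1 k1 G2 k2 m n E \<longleftrightarrow> trivial_left_kernel k2 G2 (unerased n E) m"
  using assms correctable_imp_trivial_left_kernel trivial_left_kernel_imp_correctable by metis

lemma correctable_iff_saturated: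
  fixes G1 G2 :: "nat \<Rightarrow> nat \<Rightarrow> 'k::field"
  assumes "1 \<le> m" and "is_MDS G1 m (m - 1)" and "full_row_rank G2 k2 n"
  shows "correctable G1 (m - 1) G2 k2 m n E \<longleftrightarrow> saturated k2 G2 (unerased n E) m"
proof -
  obtain h where "parity_check G1 (m - 1) m h" and "\<forall>i<m. h i \<noteq> 0"
    using MDS_parity_check[OF assms(1,2)] .
  moreover have "\<forall>i<m. finite (unerased n E i)"
    by (simp add: unerased_def)
  ultimately show ?thesis
    using correctable_iff_trivial_left_kernel[OF assms(1) _ _ assms(3)]
      saturated_iff_trivial_left_kernel by metis
qed

lemma saturated_cong:
  assumes "\<And>i. i < l \<Longrightarrow> A i = B i"
  shows "saturated k V A l \<longleftrightarrow> saturated k V B l"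
proof -
  have "gblock k V A r c = gblock k V B r c" if "r < l * k" for r c
  proof -
    have "r div k < l"
      using that by (simp add: less_mult_imp_div_less)
    then have "(\<Sum>t<r div k. card (A t)) = (\<Sum>t<r div k. card (B t))" and "A (r div k) = B (r div k)"
      using assms by (auto intro: sum.cong)
    then show ?thesis
      unfolding gblock_def Let_def restrict_cols_def by simp
  qed
  then have "(\<Sum>r<l * k. u r * gblock k V A r c) = (\<Sum>r<l * k. u r * gblock k V B r c)" for u c
    by (intro sum.cong) simp_all
  moreover have "(\<Sum>i<l. card (A i)) = (\<Sum>i<l. card (B i))"
    using assms by simp
  ultimately show ?thesis
    unfolding saturated_def full_row_rank_def by simp
qed

lemma all_families_iff_all_patterns:
  assumes "\<And>A B. (\<And>i. i < m \<Longrightarrow> A i = B i) \<Longrightarrow> P A \<longleftrightarrow> P B"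
  shows "(\<forall>A. (\<forall>i<m. A i \<subseteq> {..<n}) \<longrightarrow> P A) \<longleftrightarrow> (\<forall>E \<subseteq> {..<m} \<times> {..<n}. P (unerased n E))"
proof
  assume families: "\<forall>A. (\<forall>i<m. A i \<subseteq> {..<n}) \<longrightarrow> P A"
  have "\<forall>i<m. unerased n E i \<subseteq> {..<n}" for E
    by (auto simp: unerased_def)
  then show "\<forall>E \<subseteq> {..<m} \<times> {..<n}. P (unerased n E)"
    using families by blast
next
  assume patterns: "\<forall>E \<subseteq> {..<m} \<times> {..<n}. P (unerased n E)"
  show "\<forall>A. (\<forall>i<m. A i \<subseteq> {..<n}) \<longrightarrow> P A"
  proof (intro allI impI)
    fix A
    assume A: "\<forall>i<m. A i \<subseteq> {..<n}"
    define E where "E = {(i, j). i < m \<and> j < n \<and> j \<notin> A i}"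
    have "unerased n E i = A i" if "i < m" for i
      using A that by (auto simp: E_def unerased_def)
    moreover have "E \<subseteq> {..<m} \<times> {..<n}"
      by (auto simp: E_def)
    ultimately show "P A"
      using patterns assms[of A "unerased n E"] by auto
  qed
qed

lemma MR_patterns_redundancy_one_iff:
  assumes "1 \<le> m" and "b \<le> n"
  shows "E \<in> MR_patterns TYPE('a::field) m n 1 b \<longleftrightarrow>
    E \<subseteq> {..<m} \<times> {..<n} \<and> sat_property TYPE('a) (n - b) (unerased n E) m"
proof -
  have "correctable (generic 0 :: _ \<Rightarrow> _ \<Rightarrow> 'a gfield) (m - 1) (generic 1) (n - b) m n E
      \<longleftrightarrow> saturated (n - b) (generic 1 :: _ \<Rightarrow> _ \<Rightarrow> 'a gfield) (unerased n E) m"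
    by (rule correctable_iff_saturated[OF assms(1) is_MDS_generic full_row_rank_generic]) simp_all
  then show ?thesis
    by (simp add: MR_patterns_def sat_property_def saturated_generic_swap)
qed

lemma rMDS_iff_unerased_patterns:
  fixes G :: "nat \<Rightarrow> nat \<Rightarrow> 'a::field"
  shows "rMDS G n k d m \<longleftrightarrow> (\<forall>E \<subseteq> {..<m} \<times> {..<n}.
    sat_property TYPE('a) (k + d) (unerased n E) m \<longrightarrow> saturated k G (unerased n E) m)"
proof -
  have "rMDS G n k d m \<longleftrightarrow> (\<forall>A. (\<forall>i<m. A i \<subseteq> {..<n}) \<longrightarrow>
      (sat_property TYPE('a) (k + d) A m \<longrightarrow> saturated k G A m))"
    unfolding rMDS_def by blast
  also have "\<dots> \<longleftrightarrow> (\<forall>E \<subseteq> {..<m} \<times> {..<n}.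
      sat_property TYPE('a) (k + d) (unerased n E) m \<longrightarrow> saturated k G (unerased n E) m)"
  proof (rule all_families_iff_all_patterns)
    fix A B :: "nat \<Rightarrow> nat set"
    assume "\<And>i. i < m \<Longrightarrow> A i = B i"
    then show "(sat_property TYPE('a) (k + d) A m \<longrightarrow> saturated k G A m) \<longleftrightarrow>
        (sat_property TYPE('a) (k + d) B m \<longrightarrow> saturated k G B m)"
      by (simp add: sat_property_def saturated_cong[of m A B])
  qed
  finally show ?thesis .
qed

theorem theorem3p15:
  fixes G :: "nat \<Rightarrow> nat \<Rightarrow> 'a::field" and G' :: "nat \<Rightarrow> nat \<Rightarrow> 'a"
    and n b d m :: nat
  assumes "b \<le> n" and "is_code G n (n - b)"
    and "d \<le> b"
    and "1 \<le> m" and "is_MDS G' m (m - 1)"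
  shows "rMDS G n (n - b) d m \<longleftrightarrow> relaxed_MR G' G m n 1 b 1 (b - d)"
proof -
  have "E \<in> MR_patterns TYPE('a) m n 1 (b - d) \<longleftrightarrow>
      E \<subseteq> {..<m} \<times> {..<n} \<and> sat_property TYPE('a) (n - b + d) (unerased n E) m" for E
    using MR_patterns_redundancy_one_iff[where 'a = 'a, OF \<open>1 \<le> m\<close>, of "b - d" n] assms(1,3)
    by simp
  moreover have "correctable G' (m - 1) G (n - b) m n E \<longleftrightarrow> saturated (n - b) G (unerased n E) m" for E
    using correctable_iff_saturated[OF \<open>1 \<le> m\<close> \<open>is_MDS G' m (m - 1)\<close>] assms(2)
    by (simp add: is_code_def)
  ultimately show ?thesis
    unfolding rMDS_iff_unerased_patterns relaxed_MR_def Ball_def by auto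
qed

end
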